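(* Conditional independence is not preserved under setwise (hence also weak) convergence: there exist standard Borel spaces $\mathbb{U}^1,\mathbb{Y},\mathbb{U}^2$ (e.g. $\mathbb{Y}=[0,1]$, $\mathbb{U}^1=\mathbb{U}^2=\{0,1\}$), a sequence of probability measures $P_n\in\mathcal{P}(\mathbb{U}^1\times\mathbb{Y}\times\mathbb{U}^2)$ with $P_n(du^1|y,u^2)=P_n(du^1|y)$ for all $n$, and a probability measure $P$ such that $P_n\to P$ setwise but $P(du^1|y,u^2)\neq P(du^1|y)$ (i.e., under $P$, $u^1$ and $u^2$ are not conditionally independent given $y$).
   Context: $P_n\to P$ setwise means $\int f\,dP_n\to\int f\,dP$ for all bounded measurable $f$; weakly means the same for all bounded continuous $f$. *)

theory Defs
  imports "HOL-Probability.Probability"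
begin

definition setwise_conv :: "'a measure \<Rightarrow> (nat \<Rightarrow> 'a measure) \<Rightarrow> 'a measure \<Rightarrow> bool" where
  "setwise_conv M Pn P \<longleftrightarrow>
     (\<forall>f :: 'a \<Rightarrow> real. f \<in> borel_measurable M \<longrightarrow> bounded (range f) \<longrightarrow>
        (\<lambda>n. integral\<^sup>L (Pn n) f) \<longlonglongrightarrow> integral\<^sup>L P f)"

text \<open>Under P on U1 x Y x U2: P(du1 | y,u2) = P(du1 | y), i.e. for every measurable A
  the conditional probability of (u1 in A) given (y,u2) agrees a.e. with that given y.\<close>
definition cond_indep_given ::
  "('u1 \<times> 'y \<times> 'u2) measure \<Rightarrow> 'u1 measure \<Rightarrow> 'y measure \<Rightarrow> 'u2 measure \<Rightarrow> bool" where
  "cond_indep_given P U1 Y U2 \<longleftrightarrow>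
     (\<forall>A \<in> sets U1. AE x in P.
        real_cond_exp P (vimage_algebra (space P) (\<lambda>x. (fst (snd x), snd (snd x))) (Y \<Otimes>\<^sub>M U2))
          (\<lambda>x. indicator A (fst x)) x
      = real_cond_exp P (vimage_algebra (space P) (\<lambda>x. fst (snd x)) Y)
          (\<lambda>x. indicator A (fst x)) x)"

end

theory Submission
  imports Defs
begin

text \<open>Let \<open>y\<close> be uniform on \<open>[0,1]\<close>. Under \<open>P\<^sub>n\<close> both \<open>u\<^sup>1\<close> and \<open>u\<^sup>2\<close> equal the \<open>n\<close>-th binary
  digit of \<open>y\<close>; being functions of \<open>y\<close>, they are conditionally independent given \<open>y\<close>. Under
  \<open>P\<close>, \<open>u\<^sup>1 = u\<^sup>2\<close> is a fair coin independent of \<open>y\<close>, so \<open>E[u\<^sup>1 | y, u\<^sup>2] = u\<^sup>2\<close> while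
  \<open>E[u\<^sup>1 | y] = 1/2\<close>. Both laws live on the diagonal \<open>u\<^sup>1 = u\<^sup>2\<close>, so setwise convergence
  \<open>P\<^sub>n \<rightarrow> P\<close> reduces to \<open>\<lambda>(B \<inter> {n-th digit = 1}) \<rightarrow> \<lambda>(B)/2\<close> for Borel \<open>B \<subseteq> [0,1]\<close>:
  for intervals, shifting by \<open>2\<^sup>-\<^sup>n\<close> swaps the digit, and Dynkin's \<open>\<pi>\<close>-\<open>\<lambda>\<close> theorem extends
  this to all Borel sets. Convergence on sets yields convergence of integrals of bounded
  measurable functions by uniform approximation with level sets.\<close>

section \<open>Equidistribution of binary digits\<close>

definition binary_digit :: "nat \<Rightarrow> real \<Rightarrow> bool" where
  "binary_digit n y \<longleftrightarrow> odd \<lfloor>2^n * y\<rfloor>"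

lemma binary_digit_measurable[measurable]: "binary_digit n \<in> borel \<rightarrow>\<^sub>M count_space UNIV"
  unfolding binary_digit_def by measurable

lemma binary_digit_shift: "binary_digit n (y - 1/2^n) \<longleftrightarrow> \<not> binary_digit n y"
proof -
  have "2^n * (y - 1/2^n) = 2^n * y - 1" by (simp add: right_diff_distrib)
  then show ?thesis by (simp add: binary_digit_def)
qed

lemma fmeasurable_lborel_subset_Icc:
  "S \<in> sets borel \<Longrightarrow> S \<subseteq> {a..b::real} \<Longrightarrow> S \<in> fmeasurable lborel"
  by (intro fmeasurableI emeasure_bounded_finite bounded_subset[OF bounded_closed_interval]) auto

lemma measure_lborel_translate:
  fixes B :: "real set"
  assumes "B \<in> sets borel"
  shows "measure lborel {y. c + y \<in> B} = measure lborel B"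
proof -
  have "measure lborel B = measure (distr lborel borel ((+) c)) B"
    by (simp add: lborel_distr_plus)
  also have "\<dots> = measure lborel {y. c + y \<in> B}"
    using assms by (subst measure_distr) (auto simp: vimage_def)
  finally show ?thesis ..
qed

text \<open>Translation by \<open>d\<close> maps \<open>{0..a} \<inter> {y. P y}\<close> into \<open>({0..a} \<inter> {y. \<not> P y}) \<union> {a..a+d}\<close>.\<close>
lemma measure_Icc_shift_complement_le:
  fixes P :: "real \<Rightarrow> bool"
  assumes [measurable]: "Measurable.pred borel P"
    and "0 \<le> a" "0 < d" and flip: "\<And>y. P (y - d) \<longleftrightarrow> \<not> P y"
  shows "measure lborel ({0..a} \<inter> {y. P y}) \<le> measure lborel ({0..a} \<inter> {y. \<not> P y}) + d"
proof -
  let ?Z = "{0..a} \<inter> {y. \<not> P y}"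
  have "measure lborel ({0..a} \<inter> {y. P y}) = measure lborel {y. -d + y \<in> {0..a} \<inter> {y. P y}}"
    by (rule measure_lborel_translate[symmetric]) measurable
  also have "\<dots> \<le> measure lborel (?Z \<union> {a..a+d})"
  proof (rule measure_mono_fmeasurable)
    show "{y. -d + y \<in> {0..a} \<inter> {y. P y}} \<subseteq> ?Z \<union> {a..a+d}"
    proof
      fix y assume "y \<in> {y. -d + y \<in> {0..a} \<inter> {y. P y}}"
      then have "0 \<le> y - d" "y - d \<le> a" "\<not> P y" using flip[of y] by auto
      then show "y \<in> ?Z \<union> {a..a+d}" using \<open>0 < d\<close> by auto
    qed
    show "?Z \<union> {a..a+d} \<in> fmeasurable lborel"
      by (rule fmeasurable_lborel_subset_Icc[of _ 0 "a+d"]) (use \<open>0 \<le> a\<close> \<open>0 < d\<close> in auto)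
  qed measurable
  also have "\<dots> \<le> measure lborel ?Z + measure lborel {a..a+d}"
    by (rule measure_Un_le) measurable
  finally show ?thesis using \<open>0 < d\<close> by simp
qed

lemma measure_binary_digit_Icc:
  assumes "0 \<le> a"
  shows "\<bar>measure lborel ({0..a} \<inter> {y. binary_digit n y}) - a/2\<bar> \<le> 1/2^n"
proof -
  let ?A = "{0..a} \<inter> {y. binary_digit n y}" and ?B = "{0..a} \<inter> {y. \<not> binary_digit n y}"
  have fin: "?A \<in> fmeasurable lborel" "?B \<in> fmeasurable lborel"
    by (intro fmeasurable_lborel_subset_Icc[of _ 0 a]; measurable; auto)+
  have "measure lborel ?A + measure lborel ?B = measure lborel (?A \<union> ?B)"
    using fin by (intro measure_Union[symmetric]) (auto simp: fmeasurable_def)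
  also have "?A \<union> ?B = {0..a}" by auto
  finally have "measure lborel ?A + measure lborel ?B = a" using assms by simp
  moreover have "measure lborel ?A \<le> measure lborel ?B + 1/2^n"
    using measure_Icc_shift_complement_le[of "binary_digit n" a "1/2^n"] assms
    by (simp add: binary_digit_shift)
  moreover have "measure lborel ?B \<le> measure lborel ?A + 1/2^n"
    using measure_Icc_shift_complement_le[of "\<lambda>y. \<not> binary_digit n y" a "1/2^n"] assms
    by (simp add: binary_digit_shift)
  ultimately show ?thesis by linarith
qed

lemma tendsto_measure_atMost_binary_digit:
  "(\<lambda>n. measure lborel ({..a} \<inter> {0..1} \<inter> {y. binary_digit n y}))
     \<longlonglongrightarrow> measure lborel ({..a} \<inter> {0..1::real}) / 2"
proof -
  define c where "c = max 0 (min a 1)"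
  have "c \<ge> 0" by (simp add: c_def)
  have "{..a} \<inter> {0..1} \<inter> {y. binary_digit n y} = {0..c} \<inter> {y. binary_digit n y}" for n
  proof -
    have "binary_digit n y \<Longrightarrow> y \<noteq> 0" for y by (auto simp: binary_digit_def)
    moreover have "0 < y \<Longrightarrow> y \<le> c \<longleftrightarrow> y \<le> a \<and> y \<le> 1" for y
      unfolding c_def by linarith
    ultimately show ?thesis by (auto simp: less_le)
  qed
  moreover have "measure lborel ({..a} \<inter> {0..1::real}) = c"
  proof (cases "a < 0")
    case True
    then have "{..a} \<inter> {0..1::real} = {}" by auto
    then show ?thesis using True by (simp add: c_def)
  next
    case False
    then have "{..a} \<inter> {0..1::real} = {0..c}" by (auto simp: c_def)
    then show ?thesis using \<open>c \<ge> 0\<close> by simp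
  qed
  moreover have "(\<lambda>n. measure lborel ({0..c} \<inter> {y. binary_digit n y})) \<longlonglongrightarrow> c / 2"
  proof (rule Lim_transform2[OF tendsto_const], rule Lim_null_comparison)
    show "\<forall>\<^sub>F n in sequentially. norm (c / 2 - measure lborel ({0..c} \<inter> {y. binary_digit n y})) \<le> (1/2)^n"
      using measure_binary_digit_Icc[OF \<open>c \<ge> 0\<close>] by (simp add: abs_minus_commute power_one_over)
  qed (rule LIMSEQ_power_zero, simp)
  ultimately show ?thesis by simp
qed

lemma tendsto_measure_binary_digit:
  assumes "B \<in> sets borel"
  shows "(\<lambda>n. measure lborel (B \<inter> {0..1} \<inter> {y. binary_digit n y})) \<longlonglongrightarrow> measure lborel (B \<inter> {0..1}) / 2"
proof -
  have borel_atMost: "sets borel = sigma_sets UNIV (range (atMost :: real \<Rightarrow> _))"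
    by (simp add: borel_eq_atMost sets_measure_of)
  have "Int_stable (range (atMost :: real \<Rightarrow> _))"
    by (auto simp: Int_stable_def)
  moreover have "range (atMost :: real \<Rightarrow> _) \<subseteq> Pow UNIV"
    by simp
  moreover have "B \<in> sigma_sets UNIV (range atMost)"
    using assms borel_atMost by simp
  ultimately show ?thesis
  proof (induction rule: sigma_sets_induct_disjoint)
    case (basic A)
    then show ?case using tendsto_measure_atMost_binary_digit by auto
  next
    case empty
    then show ?case by simp
  next
    case (compl A)
    have [measurable]: "A \<in> sets borel" using compl(1) borel_atMost by simp
    have diff_digit: "measure lborel ((UNIV - A) \<inter> {0..1} \<inter> {y. binary_digit n y})
        = measure lborel ({0..1} \<inter> {y. binary_digit n y}) - measure lborel (A \<inter> {0..1} \<inter> {y. binary_digit n y})" for n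
    proof -
      have "(UNIV - A) \<inter> {0..1} \<inter> {y. binary_digit n y}
          = {0..1} \<inter> {y. binary_digit n y} - A \<inter> {0..1} \<inter> {y. binary_digit n y}" by auto
      then show ?thesis
        using fmeasurable_lborel_subset_Icc[of "{0..1} \<inter> {y. binary_digit n y}" 0 1]
        by (simp only:, intro measure_Diff) (auto dest: fmeasurableD2)
    qed
    have diff: "measure lborel ((UNIV - A) \<inter> {0..1}) = 1 - measure lborel (A \<inter> {0..1})"
    proof -
      have "(UNIV - A) \<inter> {0..1} = {0..1} - A \<inter> {0..1::real}" by auto
      then show ?thesis by (simp only:, subst measure_Diff) auto
    qed
    have "(\<lambda>n. measure lborel ({0..1} \<inter> {y. binary_digit n y})) \<longlonglongrightarrow> 1/2"
      using tendsto_measure_atMost_binary_digit[of 1] by (simp add: Int_absorb1)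
    from tendsto_diff[OF this compl(2)] show ?case
      unfolding diff_digit diff by (simp add: diff_divide_distrib)
  next
    case (union A)
    have [measurable]: "A i \<in> sets borel" for i using union(2) borel_atMost by auto
    have disj: "disjoint_family (\<lambda>i. A i \<inter> S)" for S
      using union(1) by (auto simp: disjoint_family_on_def)
    have sums_Int: "(\<lambda>i. measure lborel (A i \<inter> S)) sums measure lborel ((\<Union>i. A i) \<inter> S)"
      if "S \<in> sets borel" "S \<subseteq> {0..1}" for S
    proof -
      have "(\<Union>i. A i \<inter> S) \<in> fmeasurable lborel"
        using that by (intro fmeasurable_lborel_subset_Icc[of _ 0 1]) auto
      then have "(\<lambda>i. measure lborel (A i \<inter> S)) sums measure lborel (\<Union>i. A i \<inter> S)"
        using that disj by (intro measure_UNION) (auto dest: fmeasurableD2)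
      then show ?thesis by simp
    qed
    have "(\<lambda>n. \<Sum>i. measure lborel (A i \<inter> {0..1} \<inter> {y. binary_digit n y}))
        \<longlonglongrightarrow> (\<Sum>i. measure lborel (A i \<inter> {0..1}) / 2)"
    proof (rule tannerys_theorem[THEN conjunct2, THEN conjunct2])
      show "\<forall>\<^sub>F (i, n) in sequentially \<times>\<^sub>F sequentially.
          norm (measure lborel (A i \<inter> {0..1} \<inter> {y. binary_digit n y})) \<le> measure lborel (A i \<inter> {0..1})"
        by (intro always_eventually allI, clarsimp)
          (auto intro!: measure_mono_fmeasurable fmeasurable_lborel_subset_Icc[of _ 0 1])
      show "summable (\<lambda>i. measure lborel (A i \<inter> {0..1}))"
        using sums_Int[of "{0..1}"] by (auto dest: sums_summable)
    qed (use union(3) in simp_all)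
    then show ?case
      using sums_Int[of "{0..1}"] sums_Int[of "{0..1} \<inter> {y. binary_digit n y}" for n]
      by (simp add: sums_iff suminf_divide Int_assoc)
  qed
qed

section \<open>Setwise convergence from convergence on sets\<close>

lemma integral_approx_level_sets:
  fixes f :: "'a \<Rightarrow> real" and K e :: real
  assumes "prob_space Q" and sets_Q: "sets Q = sets M" and [measurable]: "f \<in> borel_measurable M"
    and bound: "\<And>x. \<bar>f x\<bar> \<le> K" and "0 < e"
  shows "\<bar>integral\<^sup>L Q f
           - (\<Sum>k\<in>{\<lfloor>-K/e\<rfloor>..\<lfloor>K/e\<rfloor>}. e * k * measure Q {x\<in>space M. \<lfloor>f x / e\<rfloor> = k})\<bar> \<le> e"
proof -
  interpret prob_space Q by fact
  let ?I = "{\<lfloor>-K/e\<rfloor>..\<lfloor>K/e\<rfloor>}" and ?L = "\<lambda>k. {x\<in>space M. \<lfloor>f x / e\<rfloor> = k}"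
  have space_Q: "space Q = space M" using sets_Q by (rule sets_eq_imp_space_eq)
  have [measurable]: "f \<in> borel_measurable Q" using sets_Q by simp
  have [measurable]: "?L k \<in> sets Q" for k unfolding sets_Q by measurable
  define s where "s x = e * \<lfloor>f x / e\<rfloor>" for x
  have s_close: "\<bar>f x - s x\<bar> \<le> e" for x
  proof -
    have "e * \<lfloor>f x / e\<rfloor> \<le> e * (f x / e)" "e * (f x / e) < e * (\<lfloor>f x / e\<rfloor> + 1)"
      using \<open>0 < e\<close> by (intro mult_left_mono mult_strict_left_mono; linarith)+
    then show ?thesis using \<open>0 < e\<close> by (simp add: s_def distrib_left)
  qed
  have s_sum: "s x = (\<Sum>k\<in>?I. e * k * indicator (?L k) x)" if "x \<in> space M" for x
  proof -
    have "-K \<le> f x" "f x \<le> K" using bound[of x] by linarith+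
    then have "-K/e \<le> f x / e" "f x / e \<le> K/e"
      using \<open>0 < e\<close> by (intro divide_right_mono; simp)+
    then have "\<lfloor>f x / e\<rfloor> \<in> ?I" by (auto intro: floor_mono)
    then show ?thesis using that by (simp add: s_def indicator_def if_distrib sum.delta)
  qed
  have int_f: "integrable Q f"
    by (rule integrable_const_bound[where B=K]) (auto simp: bound)
  have int_s: "integrable Q s"
  proof (rule integrable_const_bound[where B="K + e"])
    have "norm (s x) \<le> K + e" for x
      using s_close[of x] bound[of x] by simp
    then show "AE x in Q. norm (s x) \<le> K + e" by simp
  qed (unfold s_def, measurable)
  have "integral\<^sup>L Q s = (\<Sum>k\<in>?I. e * k * measure Q (?L k))"
  proof -
    have "integral\<^sup>L Q s = integral\<^sup>L Q (\<lambda>x. \<Sum>k\<in>?I. e * k * indicator (?L k) x)"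
      by (intro Bochner_Integration.integral_cong) (simp_all add: s_sum space_Q)
    also have "\<dots> = (\<Sum>k\<in>?I. integral\<^sup>L Q (\<lambda>x. e * k * indicator (?L k) x))"
      by (intro Bochner_Integration.integral_sum integrable_mult_right integrable_real_indicator)
        (auto simp: less_top[symmetric])
    also have "\<dots> = (\<Sum>k\<in>?I. e * k * measure Q (?L k))"
      by (intro sum.cong refl) (simp add: space_Q Int_absorb2)
    finally show ?thesis .
  qed
  moreover have "\<bar>integral\<^sup>L Q f - integral\<^sup>L Q s\<bar> \<le> e"
  proof -
    have "\<bar>integral\<^sup>L Q f - integral\<^sup>L Q s\<bar> = \<bar>integral\<^sup>L Q (\<lambda>x. f x - s x)\<bar>"
      using int_f int_s by simp
    also have "\<dots> \<le> integral\<^sup>L Q (\<lambda>x. \<bar>f x - s x\<bar>)" by (rule integral_abs_bound)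
    also have "\<dots> \<le> integral\<^sup>L Q (\<lambda>x. e)"
      using s_close int_f int_s by (intro integral_mono) auto
    finally show ?thesis by (simp add: prob_space)
  qed
  ultimately show ?thesis by simp
qed

lemma setwise_convI:
  assumes "\<And>n. prob_space (Pn n)" "\<And>n. sets (Pn n) = sets M"
    and "prob_space P" "sets P = sets M"
    and measure_conv: "\<And>C. C \<in> sets M \<Longrightarrow> (\<lambda>n. measure (Pn n) C) \<longlonglongrightarrow> measure P C"
  shows "setwise_conv M Pn P"
  unfolding setwise_conv_def
proof (intro allI impI)
  fix f :: "_ \<Rightarrow> real" assume f[measurable]: "f \<in> borel_measurable M" and "bounded (range f)"
  then obtain K where K: "\<And>x. \<bar>f x\<bar> \<le> K" unfolding bounded_real by auto
  show "(\<lambda>n. integral\<^sup>L (Pn n) f) \<longlonglongrightarrow> integral\<^sup>L P f"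
  proof (rule LIMSEQ_I)
    fix r :: real assume "0 < r"
    define e where "e = r / 3"
    have "0 < e" using \<open>0 < r\<close> by (simp add: e_def)
    define S where "S Q = (\<Sum>k\<in>{\<lfloor>-K/e\<rfloor>..\<lfloor>K/e\<rfloor>}. e * k * measure Q {x\<in>space M. \<lfloor>f x / e\<rfloor> = k})" for Q
    have "(\<lambda>n. S (Pn n)) \<longlonglongrightarrow> S P"
      unfolding S_def by (intro tendsto_intros measure_conv) measurable
    then obtain N where N: "\<forall>n\<ge>N. norm (S (Pn n) - S P) < e"
      using LIMSEQ_D \<open>0 < e\<close> by blast
    have approx_Pn: "\<bar>integral\<^sup>L (Pn n) f - S (Pn n)\<bar> \<le> e" for n
      unfolding S_def using assms(1,2) f K \<open>0 < e\<close> by (rule integral_approx_level_sets)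
    have approx_P: "\<bar>integral\<^sup>L P f - S P\<bar> \<le> e"
      unfolding S_def using assms(3,4) f K \<open>0 < e\<close> by (rule integral_approx_level_sets)
    have "\<bar>integral\<^sup>L (Pn n) f - integral\<^sup>L P f\<bar> < r" if "n \<ge> N" for n
    proof -
      have "\<bar>S (Pn n) - S P\<bar> < e" using N that by simp
      with approx_Pn[of n] approx_P show ?thesis
        unfolding e_def abs_le_iff abs_less_iff by linarith
    qed
    then show "\<exists>N. \<forall>n\<ge>N. norm (integral\<^sup>L (Pn n) f - integral\<^sup>L P f) < r" by auto
  qed
qed

section \<open>Conditional expectation given a random variable\<close>

lemma (in finite_measure) sigma_finite_subalgebra_vimage_algebra:
  assumes "T \<in> M \<rightarrow>\<^sub>M N"
  shows "sigma_finite_subalgebra M (vimage_algebra (space M) T N)"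
proof (rule finite_measure_subalgebra_is_sigma_finite)
  have "subalgebra M (vimage_algebra (space M) T N)"
    using measurable_space[OF assms] measurable_sets[OF assms]
    by (auto simp: subalgebra_def sets_vimage_algebra2 Pi_iff)
  then show "finite_measure_subalgebra M (vimage_algebra (space M) T N)"
    by (simp add: finite_measure_subalgebra_def finite_measure_subalgebra_axioms_def finite_measure_axioms)
qed

lemma (in finite_measure) real_cond_exp_vimage_AE_eq:
  assumes T: "T \<in> M \<rightarrow>\<^sub>M N" and [measurable]: "g \<in> borel_measurable N"
    and f: "\<And>x. x \<in> space M \<Longrightarrow> f x = g (T x)"
    and h: "integrable M h" and eq: "AE x in M. h x = f x"
  shows "AE x in M. real_cond_exp M (vimage_algebra (space M) T N) h x = f x"
proof -
  let ?F = "vimage_algebra (space M) T N"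
  interpret sigma_finite_subalgebra M ?F
    using T by (rule sigma_finite_subalgebra_vimage_algebra)
  have "T \<in> ?F \<rightarrow>\<^sub>M N"
    by (rule measurable_vimage_algebra1) (use measurable_space[OF T] in auto)
  then have "(\<lambda>x. g (T x)) \<in> borel_measurable ?F"
    by measurable
  then have f_F: "f \<in> borel_measurable ?F"
    by (rule measurable_cong[THEN iffD1, rotated]) (simp add: f)
  then have f_M: "f \<in> borel_measurable M"
    by (rule measurable_from_subalg[OF subalg])
  have "integrable M f"
    using h f_M eq by (rule integrable_cong_AE_imp)
  then have "AE x in M. real_cond_exp M ?F f x = f x"
    using f_F by (rule real_cond_exp_F_meas)
  moreover have "AE x in M. real_cond_exp M ?F h x = real_cond_exp M ?F f x"
    using eq h f_M by (intro real_cond_exp_cong) auto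
  ultimately show ?thesis by eventually_elim simp
qed

abbreviation "unit_borel \<equiv> restrict_space borel {0..1::real}"
abbreviation "unit_lborel \<equiv> restrict_space lborel {0..1::real}"
abbreviation "triple_space \<equiv>
  count_space UNIV \<Otimes>\<^sub>M (unit_borel \<Otimes>\<^sub>M count_space UNIV) :: (bool \<times> real \<times> bool) measure"

definition digit_model :: "nat \<Rightarrow> (bool \<times> real \<times> bool) measure" where
  "digit_model n = distr unit_lborel triple_space (\<lambda>y. (binary_digit n y, y, binary_digit n y))"

definition coin_model :: "(bool \<times> real \<times> bool) measure" where
  "coin_model = distr (measure_pmf (bernoulli_pmf (1/2)) \<Otimes>\<^sub>M unit_lborel) triple_space (\<lambda>(c, y). (c, y, c))"

lemma sets_unit_lborel: "sets unit_lborel = sets unit_borel"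
  by (simp add: sets_restrict_space)

lemma prob_space_unit_lborel: "prob_space unit_lborel"
  by (rule prob_spaceI) (simp add: emeasure_restrict_space)

lemma binary_digit_measurable_unit[measurable]: "binary_digit n \<in> unit_borel \<rightarrow>\<^sub>M count_space UNIV"
  by (rule measurable_restrict_space1) measurable

lemma id_measurable_unit[measurable]: "(\<lambda>y. y) \<in> borel_measurable unit_borel"
  by (rule measurable_restrict_space1) simp

lemma digit_embedding_measurable: "(\<lambda>y. (binary_digit n y, y, binary_digit n y)) \<in> unit_lborel \<rightarrow>\<^sub>M triple_space"
  unfolding measurable_cong_sets[OF sets_unit_lborel refl] by measurable

lemma coin_embedding_measurable:
  "(\<lambda>(c, y). (c, y, c)) \<in> measure_pmf (bernoulli_pmf (1/2)) \<Otimes>\<^sub>M unit_lborel \<rightarrow>\<^sub>M triple_space"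
proof -
  have "sets (measure_pmf (bernoulli_pmf (1/2)) \<Otimes>\<^sub>M unit_lborel) = sets (count_space UNIV \<Otimes>\<^sub>M unit_borel)"
    by (intro sets_pair_measure_cong) (simp_all add: sets_unit_lborel)
  then show ?thesis
    unfolding measurable_cong_sets[OF _ refl] by measurable
qed

lemma prob_space_digit_model: "prob_space (digit_model n)"
  unfolding digit_model_def
  by (intro prob_space.prob_space_distr prob_space_unit_lborel digit_embedding_measurable)

lemma sets_digit_model: "sets (digit_model n) = sets triple_space"
  by (simp add: digit_model_def)

lemma prob_space_coin_model: "prob_space coin_model"
  unfolding coin_model_def
  by (intro prob_space.prob_space_distr coin_embedding_measurable prob_space_pair
      prob_space_unit_lborel prob_space_measure_pmf)

lemma sets_coin_model: "sets coin_model = sets triple_space"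
  by (simp add: coin_model_def)

definition diagonal_section :: "bool \<Rightarrow> (bool \<times> real \<times> bool) set \<Rightarrow> real set" where
  "diagonal_section b C = {y \<in> {0..1}. (b, y, b) \<in> C}"

lemma diagonal_section_subset: "diagonal_section b C \<subseteq> {0..1}"
  by (auto simp: diagonal_section_def)

lemma diagonal_section_borel[measurable]:
  assumes "C \<in> sets triple_space"
  shows "diagonal_section b C \<in> sets borel"
proof -
  have "(\<lambda>y. (b, y, b)) -` C \<inter> space unit_borel \<in> sets unit_borel"
    using assms by measurable
  moreover have "(\<lambda>y. (b, y, b)) -` C \<inter> space unit_borel = diagonal_section b C"
    by (auto simp: diagonal_section_def)
  ultimately show ?thesis by (auto simp: sets_restrict_space_iff)
qed

lemma measure_digit_model:
  fixes n :: nat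
  assumes C: "C \<in> sets triple_space"
  defines "S \<equiv> \<lambda>b. diagonal_section b C" and "D \<equiv> {y. binary_digit n y}"
  shows "measure (digit_model n) C
    = measure lborel (S True \<inter> D) + (measure lborel (S False) - measure lborel (S False \<inter> D))"
proof -
  have [measurable]: "S b \<in> sets borel" "D \<in> sets borel" for b
    using C by (simp_all add: S_def D_def)
  have fin: "emeasure lborel X \<noteq> \<infinity>" if "X \<in> sets borel" "X \<subseteq> S b" for X b
    using that diagonal_section_subset[of b C] fmeasurable_lborel_subset_Icc[of X 0 1]
    unfolding S_def by (auto dest: fmeasurableD2)
  have "measure (digit_model n) C
      = measure unit_lborel ((\<lambda>y. (binary_digit n y, y, binary_digit n y)) -` C \<inter> space unit_lborel)"
    unfolding digit_model_def using C by (rule measure_distr[OF digit_embedding_measurable])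
  also have "(\<lambda>y. (binary_digit n y, y, binary_digit n y)) -` C \<inter> space unit_lborel
      = (S True \<inter> D) \<union> (S False - D)"
    by (auto simp: S_def D_def diagonal_section_def) (metis (full_types))
  also have "measure unit_lborel \<dots> = measure lborel ((S True \<inter> D) \<union> (S False - D))"
    by (rule measure_restrict_space) (auto simp: S_def diagonal_section_def)
  also have "\<dots> = measure lborel (S True \<inter> D) + measure lborel (S False - D)"
    using fin[of "S True \<inter> D" True] fin[of "S False - D" False] by (intro measure_Union) auto
  also have "S False - D = S False - S False \<inter> D"
    by auto
  also have "measure lborel \<dots> = measure lborel (S False) - measure lborel (S False \<inter> D)"
    using fin[of "S False" False] by (intro measure_Diff) auto
  finally show ?thesis .
qed

lemma measure_coin_model:
  assumes C: "C \<in> sets triple_space"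
  shows "measure coin_model C
    = (measure lborel (diagonal_section True C) + measure lborel (diagonal_section False C)) / 2"
proof -
  let ?B = "measure_pmf (bernoulli_pmf (1/2))"
  let ?X = "(\<lambda>(c, y). (c, y, c)) -` C \<inter> space (?B \<Otimes>\<^sub>M unit_lborel)"
  have emeasure_section: "emeasure lborel (diagonal_section b C) = measure lborel (diagonal_section b C)" for b
    using C diagonal_section_subset[of b C]
    by (intro emeasure_eq_measure2 fmeasurableD2 fmeasurable_lborel_subset_Icc) auto
  interpret unit_lborel: prob_space unit_lborel by (rule prob_space_unit_lborel)
  interpret coin: prob_space coin_model by (rule prob_space_coin_model)
  have "emeasure coin_model C = emeasure (?B \<Otimes>\<^sub>M unit_lborel) ?X"
    unfolding coin_model_def using C by (rule emeasure_distr[OF coin_embedding_measurable])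
  also have "\<dots> = (\<integral>\<^sup>+c. emeasure unit_lborel (Pair c -` ?X) \<partial>?B)"
    by (rule unit_lborel.emeasure_pair_measure_alt[OF measurable_sets[OF coin_embedding_measurable C]])
  also have "\<dots> = (\<integral>\<^sup>+c. emeasure lborel (diagonal_section c C) \<partial>?B)"
  proof (intro nn_integral_cong)
    fix c
    have "Pair c -` ?X = diagonal_section c C"
      by (auto simp: diagonal_section_def space_pair_measure)
    then show "emeasure unit_lborel (Pair c -` ?X) = emeasure lborel (diagonal_section c C)"
      by (simp add: emeasure_restrict_space diagonal_section_subset)
  qed
  also have "\<dots> = emeasure lborel (diagonal_section True C) * ennreal (1/2)
      + emeasure lborel (diagonal_section False C) * ennreal (1/2)"
    by simp
  also have "\<dots> = ennreal ((measure lborel (diagonal_section True C) + measure lborel (diagonal_section False C)) / 2)"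
    unfolding emeasure_section
    by (metis add_divide_distrib_ennreal add_increasing measure_nonneg divide_ennreal_def
        ennreal_divide_numeral ennreal_half ennreal_plus)
  finally show ?thesis
    by (simp add: coin.emeasure_eq_measure)
qed

lemma setwise_conv_digit_model: "setwise_conv triple_space digit_model coin_model"
proof (rule setwise_convI[OF prob_space_digit_model sets_digit_model prob_space_coin_model sets_coin_model])
  fix C assume C: "C \<in> sets triple_space"
  have "(\<lambda>n. measure lborel (diagonal_section b C \<inter> {y. binary_digit n y}))
      \<longlonglongrightarrow> measure lborel (diagonal_section b C) / 2" for b
    using tendsto_measure_binary_digit[of "diagonal_section b C"] C diagonal_section_subset[of b C]
    by (simp add: Int_absorb2)
  from tendsto_add[OF this tendsto_diff[OF tendsto_const this]]
  have "(\<lambda>n. measure (digit_model n) C)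
      \<longlonglongrightarrow> measure lborel (diagonal_section True C) / 2
        + (measure lborel (diagonal_section False C) - measure lborel (diagonal_section False C) / 2)"
    unfolding measure_digit_model[OF C] .
  then show "(\<lambda>n. measure (digit_model n) C) \<longlonglongrightarrow> measure coin_model C"
    unfolding measure_coin_model[OF C] by (simp add: add_divide_distrib)
qed

lemma projections_measurable:
  assumes "sets Q = sets triple_space"
  shows "(\<lambda>x. (fst (snd x), snd (snd x))) \<in> Q \<rightarrow>\<^sub>M unit_borel \<Otimes>\<^sub>M count_space UNIV"
    and "(\<lambda>x. fst (snd x)) \<in> Q \<rightarrow>\<^sub>M unit_borel"
  unfolding measurable_cong_sets[OF assms refl]
  by (rule measurable_Pair; rule measurable_compose[OF measurable_snd]; simp)
    (rule measurable_compose[OF measurable_snd measurable_fst])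

lemma AE_digit_model: "AE x in digit_model n. fst x = binary_digit n (fst (snd x))"
proof -
  have "Measurable.pred triple_space (\<lambda>x. fst x = binary_digit n (fst (snd x)))"
    by measurable
  then show ?thesis
    unfolding digit_model_def pred_def
    by (rule AE_distr_iff[OF digit_embedding_measurable, THEN iffD2]) (rule AE_I2, simp)
qed

lemma AE_coin_model: "AE x in coin_model. fst x = snd (snd x)"
proof -
  have "Measurable.pred triple_space (\<lambda>x. fst x = snd (snd x))"
    by measurable
  then show ?thesis
    unfolding coin_model_def pred_def
    by (rule AE_distr_iff[OF coin_embedding_measurable, THEN iffD2]) (rule AE_I2, simp add: split_beta)
qed

lemma integrable_indicator_fst:
  assumes "finite_measure Q" "sets Q = sets triple_space"
  shows "integrable Q (\<lambda>x. indicator A (fst x) :: real)"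
  by (rule finite_measure.integrable_const_bound[OF assms(1), where B=1])
    (simp, unfold measurable_cong_sets[OF assms(2) refl], measurable)

lemma cond_indep_digit_model:
  "cond_indep_given (digit_model n) (count_space UNIV) unit_borel (count_space UNIV)"
  unfolding cond_indep_given_def
proof (intro ballI)
  fix A :: "bool set"
  let ?h = "\<lambda>x :: bool \<times> real \<times> bool. indicator A (fst x) :: real"
  let ?f = "\<lambda>x :: bool \<times> real \<times> bool. indicator A (binary_digit n (fst (snd x))) :: real"
  have fin: "finite_measure (digit_model n)"
    by (rule prob_space.finite_measure[OF prob_space_digit_model])
  note h = integrable_indicator_fst[OF fin sets_digit_model]
  have eq: "AE x in digit_model n. ?h x = ?f x"
    using AE_digit_model by eventually_elim (erule arg_cong)
  have "AE x in digit_model n. real_cond_exp (digit_model n)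
      (vimage_algebra (space (digit_model n)) (\<lambda>x. (fst (snd x), snd (snd x))) (unit_borel \<Otimes>\<^sub>M count_space UNIV)) ?h x
      = ?f x"
    by (rule finite_measure.real_cond_exp_vimage_AE_eq[OF fin projections_measurable(1)[OF sets_digit_model]
          _ _ h eq, where g="\<lambda>p. indicator A (binary_digit n (fst p))"])
      simp_all
  moreover have "AE x in digit_model n. real_cond_exp (digit_model n)
      (vimage_algebra (space (digit_model n)) (\<lambda>x. fst (snd x)) unit_borel) ?h x = ?f x"
    by (rule finite_measure.real_cond_exp_vimage_AE_eq[OF fin projections_measurable(2)[OF sets_digit_model]
          _ _ h eq, where g="\<lambda>y. indicator A (binary_digit n y)"])
      simp_all
  ultimately show "AE x in digit_model n. real_cond_exp (digit_model n)
      (vimage_algebra (space (digit_model n)) (\<lambda>x. (fst (snd x), snd (snd x))) (unit_borel \<Otimes>\<^sub>M count_space UNIV)) ?h x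
    = real_cond_exp (digit_model n) (vimage_algebra (space (digit_model n)) (\<lambda>x. fst (snd x)) unit_borel) ?h x"
    by eventually_elim (rule trans, assumption, rule sym)
qed

lemma real_cond_exp_coin_model_given_y:
  "AE x in coin_model. real_cond_exp coin_model (vimage_algebra (space coin_model) (\<lambda>x. fst (snd x)) unit_borel)
     (\<lambda>x. indicator {True} (fst x)) x = 1/2"
proof -
  let ?F = "vimage_algebra (space coin_model) (\<lambda>x. fst (snd x)) unit_borel"
  have fin: "finite_measure coin_model"
    by (rule prob_space.finite_measure[OF prob_space_coin_model])
  have space_coin_model: "space coin_model = UNIV \<times> {0..1} \<times> UNIV"
    by (simp add: coin_model_def space_pair_measure)
  have "sigma_finite_subalgebra coin_model ?F"
    using projections_measurable(2)[OF sets_coin_model]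
    by (rule finite_measure.sigma_finite_subalgebra_vimage_algebra[OF fin])
  then show ?thesis
  proof (rule sigma_finite_subalgebra.real_cond_exp_charact)
    fix B assume "B \<in> sets ?F"
    moreover have "(\<lambda>x. fst (snd x)) \<in> space coin_model \<rightarrow> space unit_borel"
      using measurable_space[OF projections_measurable(2)[OF sets_coin_model]] by auto
    ultimately obtain C where C: "C \<in> sets unit_borel" and B: "B = (\<lambda>x. fst (snd x)) -` C \<inter> space coin_model"
      by (auto simp: sets_vimage_algebra2)
    have C_sub: "C \<subseteq> {0..1}"
      using sets.sets_into_space[OF C] by simp
    have B_set: "B \<in> sets triple_space"
      unfolding B sets_coin_model[symmetric]
      by (rule measurable_sets[OF projections_measurable(2)[OF sets_coin_model] C])
    have "{x \<in> space triple_space. fst x} \<in> sets triple_space"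
      by measurable
    moreover have "B \<inter> {x. fst x} = B \<inter> {x \<in> space triple_space. fst x}"
      using sets.sets_into_space[OF B_set] by auto
    ultimately have B_True_set: "B \<inter> {x. fst x} \<in> sets triple_space"
      using B_set by simp
    have B_space: "B \<subseteq> space coin_model"
      by (simp add: B)
    have sections: "diagonal_section b B = C" "diagonal_section True (B \<inter> {x. fst x}) = C"
      "diagonal_section False (B \<inter> {x. fst x}) = {}" for b
      using C_sub by (auto simp: B space_coin_model diagonal_section_def)
    have "(\<integral>x\<in>B. (indicator {True} (fst x) :: real) \<partial>coin_model)
        = integral\<^sup>L coin_model (indicator (B \<inter> {x. fst x}))"
      unfolding set_lebesgue_integral_def
      by (intro Bochner_Integration.integral_cong) (auto simp: indicator_def)
    also have "\<dots> = measure coin_model (B \<inter> {x. fst x})"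
      using B_space by (simp add: Int_absorb2 le_infI1)
    also have "\<dots> = measure coin_model B / 2"
      using measure_coin_model[OF B_set] measure_coin_model[OF B_True_set] by (simp add: sections)
    also have "\<dots> = (\<integral>x\<in>B. (1/2 :: real) \<partial>coin_model)"
      using B_set by (simp add: set_integral_const sets_coin_model finite_measure.emeasure_finite[OF fin])
    finally show "(\<integral>x\<in>B. (indicator {True} (fst x) :: real) \<partial>coin_model) = (\<integral>x\<in>B. (1/2 :: real) \<partial>coin_model)" .
  qed (auto intro: finite_measure.integrable_const_bound[OF fin, where B=1] integrable_indicator_fst[OF fin sets_coin_model])
qed

lemma not_cond_indep_coin_model:
  "\<not> cond_indep_given coin_model (count_space UNIV) unit_borel (count_space UNIV)"
proof
  let ?h = "\<lambda>x :: bool \<times> real \<times> bool. indicator {True} (fst x) :: real"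
  let ?f = "\<lambda>x :: bool \<times> real \<times> bool. indicator {True} (snd (snd x)) :: real"
  assume "cond_indep_given coin_model (count_space UNIV) unit_borel (count_space UNIV)"
  from this[unfolded cond_indep_given_def, THEN bspec[where x="{True}"]]
  have "AE x in coin_model. real_cond_exp coin_model
      (vimage_algebra (space coin_model) (\<lambda>x. (fst (snd x), snd (snd x))) (unit_borel \<Otimes>\<^sub>M count_space UNIV)) ?h x
    = real_cond_exp coin_model (vimage_algebra (space coin_model) (\<lambda>x. fst (snd x)) unit_borel) ?h x"
    by simp
  moreover have "AE x in coin_model. real_cond_exp coin_model
      (vimage_algebra (space coin_model) (\<lambda>x. (fst (snd x), snd (snd x))) (unit_borel \<Otimes>\<^sub>M count_space UNIV)) ?h x
    = ?f x"
  proof -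
    have fin: "finite_measure coin_model"
      by (rule prob_space.finite_measure[OF prob_space_coin_model])
    have eq: "AE x in coin_model. ?h x = ?f x"
      using AE_coin_model by eventually_elim (erule arg_cong)
    show ?thesis
      by (rule finite_measure.real_cond_exp_vimage_AE_eq[OF fin projections_measurable(1)[OF sets_coin_model]
          _ _ integrable_indicator_fst[OF fin sets_coin_model] eq, where g="\<lambda>p. indicator {True} (snd p)"])
        simp_all
  qed
  moreover note real_cond_exp_coin_model_given_y
  ultimately have "AE x in coin_model. ?f x = 1/2"
    by eventually_elim (rule trans[OF sym], assumption, rule trans)
  then have "AE x in coin_model. False"
    by eventually_elim (simp add: indicator_def of_bool_def split: if_splits)
  then show False
    using prob_space.AE_False[OF prob_space_coin_model] by simp
qed

theorem mainTheorem4: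
  "\<exists>(Pn :: nat \<Rightarrow> (bool \<times> real \<times> bool) measure) (P :: (bool \<times> real \<times> bool) measure).
     (\<forall>n. prob_space (Pn n) \<and>
          sets (Pn n) = sets (count_space UNIV \<Otimes>\<^sub>M (restrict_space borel {0..1::real} \<Otimes>\<^sub>M count_space UNIV)) \<and>
          cond_indep_given (Pn n) (count_space UNIV) (restrict_space borel {0..1}) (count_space UNIV)) \<and>
     prob_space P \<and>
     sets P = sets (count_space UNIV \<Otimes>\<^sub>M (restrict_space borel {0..1::real} \<Otimes>\<^sub>M count_space UNIV)) \<and>
     setwise_conv (count_space UNIV \<Otimes>\<^sub>M (restrict_space borel {0..1::real} \<Otimes>\<^sub>M count_space UNIV)) Pn P \<and>
     \<not> cond_indep_given P (count_space UNIV) (restrict_space borel {0..1}) (count_space UNIV)"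
  by (intro exI[of _ digit_model] exI[of _ coin_model] conjI allI prob_space_digit_model
      sets_digit_model cond_indep_digit_model prob_space_coin_model sets_coin_model
      setwise_conv_digit_model not_cond_indep_coin_model)

end
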